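(* Let $\dot{\bm{Y}}\in\mathbb{Q}^{m\times n}$ with $m\ge n$, let $\lambda>0$, and let $\dot{\bm{Y}}=\dot{\bm{U}}\bm{\Sigma}_{\dot{\bm{Y}}}\dot{\bm{V}}^*$ be a quaternion SVD of $\dot{\bm{Y}}$, with $\dot{\bm{U}}\in\mathbb{Q}^{m\times m}$, $\dot{\bm{V}}\in\mathbb{Q}^{n\times n}$ unitary and singular values $\sigma_{\dot{\bm{Y}},1}\ge\dots\ge\sigma_{\dot{\bm{Y}},n}\ge0$ on the diagonal of $\bm{\Sigma}_{\dot{\bm{Y}}}$. Consider the problem $$\min_{\dot{\bm{X}}\in\mathbb{Q}^{m\times n}}\ \frac12\|\dot{\bm{Y}}-\dot{\bm{X}}\|_F^2+\lambda\frac{\|\dot{\bm{X}}\|_*}{\|\dot{\bm{X}}\|_F}.$$ A global optimum of this problem is given by $\dot{\bm{X}}=\dot{\bm{U}}\tilde{\bm{\Sigma}}_{\dot{\bm{X}}}\dot{\bm{V}}^*$, where $\tilde{\bm{\Sigma}}_{\dot{\bm{X}}}$ is the $m\times n$ nonnegative diagonal matrix with diagonal $\tilde{\bm{\sigma}}=(\tilde\sigma_{1},\dots,\tilde\sigma_{n})$, and $\tilde{\bm{\sigma}}$ is a solution of the real vector problem $$\min_{\bm{\sigma}\in\mathbb{R}^n}\ \frac12\|\bm{\sigma}_{\dot{\bm{Y}}}-\bm{\sigma}\|_2^2+\lambda\frac{\|\bm{\sigma}\|_1}{\|\bm{\sigma}\|_2}\quad\text{s.t.}\quad \sigma_1\ge\sigma_2\ge\dots\ge\sigma_n\ge0,$$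 with $\bm{\sigma}_{\dot{\bm{Y}}}=(\sigma_{\dot{\bm{Y}},1},\dots,\sigma_{\dot{\bm{Y}},n})$.
   Context: $\mathbb{Q}$ denotes the real quaternion algebra with basis $1,\bm{i},\bm{j},\bm{k}$. ${}^*$ denotes conjugate transpose; a quaternion SVD of $\dot{\bm{Y}}$ is a factorization $\dot{\bm{Y}}=\dot{\bm{U}}\bm{\Sigma}\dot{\bm{V}}^*$ with $\dot{\bm{U}},\dot{\bm{V}}$ unitary quaternion matrices and $\bm{\Sigma}$ real, nonnegative, diagonal with descending diagonal entries (the singular values). The nuclear norm $\|\dot{\bm{X}}\|_*$ is the sum of the singular values and $\|\dot{\bm{X}}\|_F=\sqrt{\sum_{i,j}|\dot x_{ij}|^2}$ (the $\ell_2$ norm of the singular values); the objective is considered for nonzero $\dot{\bm{X}}$ (and nonzero $\bm{\sigma}$ in the vector problem). *)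

theory Defs
  imports "HOL-Analysis.Analysis"
begin

datatype quat = Quat (qre: real) (qi: real) (qj: real) (qk: real)

lemma quat_eq_iff: "(q = r) \<longleftrightarrow> qre q = qre r \<and> qi q = qi r \<and> qj q = qj r \<and> qk q = qk r"
  by (cases q; cases r) auto

instantiation quat :: ring_1
begin
definition "0 = Quat 0 0 0 0"
definition "1 = Quat 1 0 0 0"
definition "p + q = Quat (qre p + qre q) (qi p + qi q) (qj p + qj q) (qk p + qk q)"
definition "p - q = Quat (qre p - qre q) (qi p - qi q) (qj p - qj q) (qk p - qk q)"
definition "- q = Quat (- qre q) (- qi q) (- qj q) (- qk q)"
definition "p * q = Quat
   (qre p * qre q - qi p * qi q - qj p * qj q - qk p * qk q)
   (qre p * qi q + qi p * qre q + qj p * qk q - qk p * qj q)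
   (qre p * qj q - qi p * qk q + qj p * qre q + qk p * qi q)
   (qre p * qk q + qi p * qj q - qj p * qi q + qk p * qre q)"
instance
  by intro_classes
     (simp_all add: quat_eq_iff zero_quat_def one_quat_def plus_quat_def minus_quat_def
        uminus_quat_def times_quat_def algebra_simps)
end

definition qcnj :: "quat \<Rightarrow> quat" where
  "qcnj q = Quat (qre q) (- qi q) (- qj q) (- qk q)"

definition qnorm2 :: "quat \<Rightarrow> real" where
  "qnorm2 q = (qre q)\<^sup>2 + (qi q)\<^sup>2 + (qj q)\<^sup>2 + (qk q)\<^sup>2"

definition qreal :: "real \<Rightarrow> quat" where
  "qreal r = Quat r 0 0 0"

text \<open>A quaternion matrix is a function on indices; an m x n matrix has entries
  at (i,j) with i<m, j<n and is zero elsewhere.\<close>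
type_synonym qmat = "nat \<Rightarrow> nat \<Rightarrow> quat"

definition qmats :: "nat \<Rightarrow> nat \<Rightarrow> qmat set" where
  "qmats m n = {A. \<forall>i j. \<not> (i < m \<and> j < n) \<longrightarrow> A i j = 0}"

definition qmult :: "nat \<Rightarrow> qmat \<Rightarrow> qmat \<Rightarrow> qmat" where
  "qmult k A B = (\<lambda>i j. \<Sum>l<k. A i l * B l j)"

definition qadj :: "qmat \<Rightarrow> qmat" where
  "qadj A = (\<lambda>i j. qcnj (A j i))"

definition qident :: "nat \<Rightarrow> qmat" where
  "qident n = (\<lambda>i j. if i = j \<and> i < n then 1 else 0)"

definition qunitary :: "nat \<Rightarrow> qmat \<Rightarrow> bool" where
  "qunitary n U \<longleftrightarrow> U \<in> qmats n n \<and> qmult n (qadj U) U = qident n \<and> qmult n U (qadj U) = qident n"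

definition qdiag :: "nat \<Rightarrow> nat \<Rightarrow> (nat \<Rightarrow> real) \<Rightarrow> qmat" where
  "qdiag m n s = (\<lambda>i j. if i = j \<and> i < m \<and> j < n then qreal (s i) else 0)"

definition is_qsvd :: "nat \<Rightarrow> nat \<Rightarrow> qmat \<Rightarrow> qmat \<Rightarrow> (nat \<Rightarrow> real) \<Rightarrow> qmat \<Rightarrow> bool" where
  "is_qsvd m n Y U s V \<longleftrightarrow>
     qunitary m U \<and> qunitary n V \<and>
     (\<forall>i < min m n. 0 \<le> s i) \<and>
     (\<forall>i j. i \<le> j \<and> j < min m n \<longrightarrow> s j \<le> s i) \<and>
     (\<forall>i \<ge> min m n. s i = 0) \<and>
     Y = qmult n (qmult m U (qdiag m n s)) (qadj V)"

definition qsingvals :: "nat \<Rightarrow> nat \<Rightarrow> qmat \<Rightarrow> nat \<Rightarrow> real" where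
  "qsingvals m n X = (SOME s. \<exists>U V. is_qsvd m n X U s V)"

definition qnuc_norm :: "nat \<Rightarrow> nat \<Rightarrow> qmat \<Rightarrow> real" where
  "qnuc_norm m n X = (\<Sum>i < min m n. qsingvals m n X i)"

definition qfro_norm :: "nat \<Rightarrow> nat \<Rightarrow> qmat \<Rightarrow> real" where
  "qfro_norm m n X = sqrt (\<Sum>i<m. \<Sum>j<n. qnorm2 (X i j))"

definition qmat_diff :: "qmat \<Rightarrow> qmat \<Rightarrow> qmat" where
  "qmat_diff A B = (\<lambda>i j. A i j - B i j)"

definition mat_obj :: "nat \<Rightarrow> nat \<Rightarrow> real \<Rightarrow> qmat \<Rightarrow> qmat \<Rightarrow> real" where
  "mat_obj m n lam Y X = (qfro_norm m n (qmat_diff Y X))\<^sup>2 / 2 + lam * qnuc_norm m n X / qfro_norm m n X"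

definition vec_obj :: "nat \<Rightarrow> real \<Rightarrow> (nat \<Rightarrow> real) \<Rightarrow> (nat \<Rightarrow> real) \<Rightarrow> real" where
  "vec_obj n lam sY s = (\<Sum>i<n. (sY i - s i)\<^sup>2) / 2
     + lam * (\<Sum>i<n. \<bar>s i\<bar>) / sqrt (\<Sum>i<n. (s i)\<^sup>2)"

definition vec_feasible :: "nat \<Rightarrow> (nat \<Rightarrow> real) \<Rightarrow> bool" where
  "vec_feasible n s \<longleftrightarrow> (\<forall>i j. i \<le> j \<and> j < n \<longrightarrow> s j \<le> s i) \<and> (\<forall>i<n. 0 \<le> s i)
     \<and> (\<exists>i<n. s i \<noteq> 0)"

end

theory Submission
  imports Defs
begin

text \<open>Let \<open>b\<close> be the singular values of a competitor \<open>X\<close>. The ratio term of the matrix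
  objective at \<open>X\<close> equals that of the vector objective at \<open>b\<close>, and Mirsky's inequality
  \<open>\<Sum>\<^sub>k (\<sigma>\<^sub>Y\<^sub>,\<^sub>k - b\<^sub>k)\<^sup>2 \<le> \<parallel>Y - X\<parallel>\<^sub>F\<^sup>2\<close> bounds the fidelity term, so the matrix objective at
  \<open>X\<close> dominates the vector objective at the feasible point \<open>b\<close>, hence the vector optimum.
  The candidate \<open>U diag(\<sigma>) V\<^sup>*\<close> shares its singular vectors with \<open>Y\<close>, so there the two
  objectives coincide.

  Mirsky's inequality follows from von Neumann's trace inequality
  \<open>Re tr(Y\<^sup>* X) \<le> \<Sum>\<^sub>k \<sigma>\<^sub>Y\<^sub>,\<^sub>k b\<^sub>k\<close>, which, writing \<open>Y = U\<^sub>1 diag(a) V\<^sub>1\<^sup>*\<close>, \<open>X = U\<^sub>2 diag(b) V\<^sub>2\<^sup>*\<close>,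
  becomes a rearrangement inequality for a doubly substochastic matrix built from the unitary
  matrices \<open>U\<^sub>1\<^sup>* U\<^sub>2\<close> and \<open>V\<^sub>2\<^sup>* V\<^sub>1\<close>; it is proved by Abel summation. Since the nuclear
  norm is defined through an SVD, its existence is needed as well: by induction, a maximiser
  \<open>(u, v)\<close> of \<open>Re u\<^sup>* X v\<close> over unit vectors is a singular pair, and Householder reflections
  complete \<open>u\<close> and \<open>v\<close> to unitary matrices that split off the largest singular value.\<close>

lemma quat_components [simp]:
  "qre 0 = 0" "qi 0 = 0" "qj 0 = 0" "qk 0 = 0"
  "qre 1 = 1" "qi 1 = 0" "qj 1 = 0" "qk 1 = 0"
  "qre (p + q) = qre p + qre q" "qi (p + q) = qi p + qi q"
  "qj (p + q) = qj p + qj q" "qk (p + q) = qk p + qk q"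
  "qre (p - q) = qre p - qre q" "qi (p - q) = qi p - qi q"
  "qj (p - q) = qj p - qj q" "qk (p - q) = qk p - qk q"
  "qre (- q) = - qre q" "qi (- q) = - qi q" "qj (- q) = - qj q" "qk (- q) = - qk q"
  "qre (qcnj q) = qre q" "qi (qcnj q) = - qi q" "qj (qcnj q) = - qj q" "qk (qcnj q) = - qk q"
  "qre (qreal r) = r" "qi (qreal r) = 0" "qj (qreal r) = 0" "qk (qreal r) = 0"
  by (simp_all add: zero_quat_def one_quat_def plus_quat_def minus_quat_def uminus_quat_def
      qcnj_def qreal_def)

lemma quat_mult_components:
  "qre (p * q) = qre p * qre q - qi p * qi q - qj p * qj q - qk p * qk q"
  "qi (p * q) = qre p * qi q + qi p * qre q + qj p * qk q - qk p * qj q"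
  "qj (p * q) = qre p * qj q - qi p * qk q + qj p * qre q + qk p * qi q"
  "qk (p * q) = qre p * qk q + qi p * qj q - qj p * qi q + qk p * qre q"
  by (simp_all add: times_quat_def)

lemma quat_sum_components [simp]:
  "qre (sum f A) = (\<Sum>x\<in>A. qre (f x))" "qi (sum f A) = (\<Sum>x\<in>A. qi (f x))"
  "qj (sum f A) = (\<Sum>x\<in>A. qj (f x))" "qk (sum f A) = (\<Sum>x\<in>A. qk (f x))"
  by (induction A rule: infinite_finite_induct; simp)+

lemma qre_mult_commute: "qre (p * q) = qre (q * p)"
  by (simp add: quat_mult_components algebra_simps)

lemma qcnj_mult: "qcnj (p * q) = qcnj q * qcnj p"
  by (simp add: quat_eq_iff quat_mult_components algebra_simps)

lemma qcnj_simps [simp]: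
  "qcnj (qcnj p) = p" "qcnj (p + q) = qcnj p + qcnj q" "qcnj (p - q) = qcnj p - qcnj q"
  "qcnj (- q) = - qcnj q" "qcnj 0 = 0" "qcnj 1 = 1" "qcnj (qreal r) = qreal r"
  "qcnj (sum f A) = (\<Sum>x\<in>A. qcnj (f x))"
  by (simp_all add: quat_eq_iff sum_negf)

lemma qreal_simps [simp]:
  "qreal 0 = 0" "qreal 1 = 1" "qreal (a + b) = qreal a + qreal b"
  "qreal (a * b) = qreal a * qreal b" "qreal (- a) = - qreal a" "qreal (a - b) = qreal a - qreal b"
  by (simp_all add: quat_eq_iff quat_mult_components)

lemma qreal_sum: "qreal (sum f A) = (\<Sum>x\<in>A. qreal (f x))"
  by (simp add: quat_eq_iff)

lemma qreal_eq_iff [simp]: "qreal a = qreal b \<longleftrightarrow> a = b"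
  by (simp add: quat_eq_iff)

lemma qreal_eq_0_iff [simp]: "qreal a = 0 \<longleftrightarrow> a = 0"
  by (simp add: quat_eq_iff)

lemma qreal_mult_commute: "qreal r * p = p * qreal r"
  by (simp add: quat_eq_iff quat_mult_components algebra_simps)

lemma qre_qreal_mult [simp]: "qre (qreal r * p) = r * qre p" "qre (p * qreal r) = qre p * r"
  by (simp_all add: quat_mult_components)

lemma qnorm2_nonneg [simp]: "0 \<le> qnorm2 p"
  by (simp add: qnorm2_def)

lemma qnorm2_eq_0_iff [simp]: "qnorm2 p = 0 \<longleftrightarrow> p = 0"
  by (simp add: qnorm2_def quat_eq_iff add_nonneg_eq_0_iff)

lemma qnorm2_simps [simp]:
  "qnorm2 0 = 0" "qnorm2 1 = 1" "qnorm2 (qreal r) = r\<^sup>2"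
  "qnorm2 (qcnj p) = qnorm2 p" "qnorm2 (- p) = qnorm2 p"
  by (simp_all add: qnorm2_def)

lemma qcnj_mult_self: "qcnj p * p = qreal (qnorm2 p)"
  by (simp add: quat_eq_iff quat_mult_components qnorm2_def algebra_simps power2_eq_square)

lemma mult_qcnj_self: "p * qcnj p = qreal (qnorm2 p)"
  by (simp add: quat_eq_iff quat_mult_components qnorm2_def algebra_simps power2_eq_square)

lemma qnorm2_mult: "qnorm2 (p * q) = qnorm2 p * qnorm2 q"
  by (simp add: quat_mult_components qnorm2_def power2_eq_square algebra_simps)

lemma qre_qcnj_mult_commute: "qre (qcnj p * q) = qre (qcnj q * p)"
  by (simp add: quat_mult_components algebra_simps)

lemma qnorm2_diff: "qnorm2 (p - q) = qnorm2 p + qnorm2 q - 2 * qre (qcnj p * q)"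
  by (simp add: quat_mult_components qnorm2_def power2_eq_square algebra_simps)

lemma qre_qcnj_mult_le: "2 * qre (qcnj p * q) \<le> qnorm2 p + qnorm2 q"
  using qnorm2_nonneg[of "p - q"] unfolding qnorm2_diff by linarith

lemma qmatsD: "A \<in> qmats m n \<Longrightarrow> m \<le> i \<or> n \<le> j \<Longrightarrow> A i j = 0"
  unfolding qmats_def by auto

lemma qmatsI: "(\<And>i j. m \<le> i \<or> n \<le> j \<Longrightarrow> A i j = 0) \<Longrightarrow> A \<in> qmats m n"
  unfolding qmats_def by auto

lemma qmult_assoc: "qmult k (qmult l A B) C = qmult l A (qmult k B C)"
  unfolding qmult_def
  by (auto simp: sum_distrib_left sum_distrib_right mult.assoc intro!: ext sum.swap)

lemma qadj_qmult: "qadj (qmult k A B) = qmult k (qadj B) (qadj A)"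
  unfolding qmult_def qadj_def by (auto simp: qcnj_mult intro!: ext)

lemma qadj_qadj [simp]: "qadj (qadj A) = A"
  unfolding qadj_def by simp

lemma qmult_qmats: "A \<in> qmats m k \<Longrightarrow> B \<in> qmats k n \<Longrightarrow> qmult k A B \<in> qmats m n"
  unfolding qmult_def by (auto intro!: qmatsI simp: qmatsD)

lemma qadj_qmats: "A \<in> qmats m n \<Longrightarrow> qadj A \<in> qmats n m"
  unfolding qadj_def by (auto intro!: qmatsI simp: qmatsD)

lemma qident_qmats [simp]: "qident n \<in> qmats n n"
  unfolding qident_def by (auto intro!: qmatsI)

lemma qdiag_qmats [simp]: "qdiag m n s \<in> qmats m n"
  unfolding qdiag_def by (auto intro!: qmatsI)

lemma qadj_qdiag [simp]: "qadj (qdiag m n s) = qdiag n m s"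
  unfolding qadj_def qdiag_def by (auto intro!: ext)

lemma qadj_qident [simp]: "qadj (qident n) = qident n"
  unfolding qadj_def qident_def by (auto intro!: ext)

lemma qdiag_cong: "(\<And>i. i < min m n \<Longrightarrow> a i = b i) \<Longrightarrow> qdiag m n a = qdiag m n b"
  unfolding qdiag_def by (auto intro!: ext)

lemma qmult_ident_right: "A \<in> qmats p n \<Longrightarrow> qmult n A (qident n) = A"
  unfolding qmult_def qident_def
  by (auto intro!: ext simp: qmatsD if_distrib[where f="\<lambda>x. _ * x"] cong: if_cong)

lemma qmult_ident_left: "A \<in> qmats m p \<Longrightarrow> qmult m (qident m) A = A"
proof (intro ext)
  fix i j assume "A \<in> qmats m p"
  then show "qmult m (qident m) A i j = A i j"
    unfolding qmult_def qident_def
    by (cases "i < m") (auto simp: qmatsD if_distrib[where f="\<lambda>x. x * _"] cong: if_cong)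
qed

lemma qmult_qdiag_left:
  "qmult k (qdiag p k s) A i j = (if i < min p k then qreal (s i) * A i j else 0)"
  unfolding qmult_def qdiag_def
  by (auto simp: if_distrib[where f="\<lambda>x. x * _"] cong: if_cong)

lemma qmult_qdiag_right:
  "qmult k A (qdiag k q s) i j = (if j < min k q then A i j * qreal (s j) else 0)"
  unfolding qmult_def qdiag_def
  by (auto simp: if_distrib[where f="\<lambda>x. _ * x"] cong: if_cong)

lemma qmat_diff_qmult:
  "qmat_diff (qmult k (qmult l U A) W) (qmult k (qmult l U B) W) = qmult k (qmult l U (qmat_diff A B)) W"
  unfolding qmult_def qmat_diff_def by (auto intro!: ext simp: algebra_simps sum_subtractf)

lemma qmat_diff_qdiag: "qmat_diff (qdiag m n a) (qdiag m n b) = qdiag m n (\<lambda>i. a i - b i)"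
  unfolding qmat_diff_def qdiag_def by (auto intro!: ext)

lemma qunitary_qmats: "qunitary n U \<Longrightarrow> U \<in> qmats n n"
  unfolding qunitary_def by blast

lemma qunitary_qident [simp]: "qunitary n (qident n)"
  unfolding qunitary_def by (simp add: qmult_ident_left[OF qident_qmats])

lemma qunitary_qadj: "qunitary n U \<Longrightarrow> qunitary n (qadj U)"
  unfolding qunitary_def by (simp add: qadj_qmats)

lemma qunitary_qmult:
  assumes "qunitary n A" "qunitary n B"
  shows "qunitary n (qmult n A B)"
proof -
  have A: "A \<in> qmats n n" "qmult n (qadj A) A = qident n" "qmult n A (qadj A) = qident n"
    and B: "B \<in> qmats n n" "qmult n (qadj B) B = qident n" "qmult n B (qadj B) = qident n"
    using assms unfolding qunitary_def by auto
  have "qmult n (qadj (qmult n A B)) (qmult n A B) = qmult n (qadj B) (qmult n (qmult n (qadj A) A) B)"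
    by (simp add: qadj_qmult qmult_assoc)
  also have "\<dots> = qident n"
    using A B by (simp add: qmult_ident_left[OF B(1)])
  finally have 1: "qmult n (qadj (qmult n A B)) (qmult n A B) = qident n" .
  have "qmult n (qmult n A B) (qadj (qmult n A B)) = qmult n A (qmult n (qmult n B (qadj B)) (qadj A))"
    by (simp add: qadj_qmult qmult_assoc)
  also have "\<dots> = qident n"
    using A B by (simp add: qmult_ident_left[OF qadj_qmats[OF A(1)]])
  finally have 2: "qmult n (qmult n A B) (qadj (qmult n A B)) = qident n" .
  show ?thesis
    using 1 2 A B unfolding qunitary_def by (simp add: qmult_qmats)
qed

lemma qunitary_cols_orthonormal:
  assumes "qunitary n U"
  shows "(\<Sum>l<n. qcnj (U l i) * U l j) = qident n i j"
proof -
  have "qmult n (qadj U) U i j = qident n i j"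
    using assms unfolding qunitary_def by simp
  then show ?thesis unfolding qmult_def qadj_def .
qed

lemma qunitary_col_norm:
  assumes "qunitary n U" "j < n"
  shows "(\<Sum>i<n. qnorm2 (U i j)) = 1"
proof -
  have "qreal (\<Sum>i<n. qnorm2 (U i j)) = qreal 1"
    using qunitary_cols_orthonormal[OF assms(1), of j j] assms(2)
    by (simp add: qident_def qcnj_mult_self qreal_sum)
  then show ?thesis by (simp only: qreal_eq_iff)
qed

lemma qunitary_row_norm:
  assumes "qunitary n U" "i < n"
  shows "(\<Sum>j<n. qnorm2 (U i j)) = 1"
  using qunitary_col_norm[OF qunitary_qadj[OF assms(1)] assms(2)] by (simp add: qadj_def)

lemma qunitary_conjugate_cancel:
  assumes "qunitary m U" "qunitary n V" "A \<in> qmats m n"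
  shows "qmult n (qmult m U (qmult n (qmult m (qadj U) A) V)) (qadj V) = A"
    and "qmult n (qmult m (qadj U) (qmult n (qmult m U A) (qadj V))) V = A"
proof -
  have "qmult n (qmult m U (qmult n (qmult m (qadj U) A) V)) (qadj V)
      = qmult m (qmult m U (qadj U)) (qmult n A (qmult n V (qadj V)))"
    by (simp add: qmult_assoc)
  then show "qmult n (qmult m U (qmult n (qmult m (qadj U) A) V)) (qadj V) = A"
    using assms unfolding qunitary_def
    by (simp add: qmult_ident_right[OF assms(3)] qmult_ident_left[OF assms(3)])
  have "qmult n (qmult m (qadj U) (qmult n (qmult m U A) (qadj V))) V
      = qmult m (qmult m (qadj U) U) (qmult n A (qmult n (qadj V) V))"
    by (simp add: qmult_assoc)
  then show "qmult n (qmult m (qadj U) (qmult n (qmult m U A) (qadj V))) V = A"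
    using assms unfolding qunitary_def
    by (simp add: qmult_ident_right[OF assms(3)] qmult_ident_left[OF assms(3)])
qed

section \<open>Von Neumann's trace inequality\<close>

definition qtrace_re :: "nat \<Rightarrow> qmat \<Rightarrow> real" where
  "qtrace_re k A = (\<Sum>i<k. qre (A i i))"

definition qfro_inner :: "nat \<Rightarrow> nat \<Rightarrow> qmat \<Rightarrow> qmat \<Rightarrow> real" where
  "qfro_inner m n A B = (\<Sum>i<m. \<Sum>j<n. qre (qcnj (A i j) * B i j))"

lemma qtrace_re_qmult_commute: "qtrace_re k (qmult l A B) = qtrace_re l (qmult k B A)"
  unfolding qtrace_re_def qmult_def
  by (simp add: qre_mult_commute[of "A _ _"]) (rule sum.swap)

lemma qfro_inner_eq_qtrace_re: "qfro_inner m n A B = qtrace_re n (qmult m (qadj A) B)"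
  unfolding qfro_inner_def qtrace_re_def qmult_def qadj_def by simp (rule sum.swap)

lemma qfro_norm_sq: "(qfro_norm m n A)\<^sup>2 = qfro_inner m n A A"
  unfolding qfro_norm_def qfro_inner_def by (simp add: qcnj_mult_self sum_nonneg)

lemma qfro_inner_diff_self:
  "qfro_inner m n (qmat_diff A B) (qmat_diff A B) = qfro_inner m n A A + qfro_inner m n B B - 2 * qfro_inner m n A B"
  unfolding qfro_inner_def qmat_diff_def
  by (simp add: qcnj_mult_self qnorm2_diff flip: qcnj_simps(3))
     (simp add: sum.distrib sum_subtractf sum_distrib_left)

lemma qfro_norm_eq_0_iff:
  assumes "X \<in> qmats m n"
  shows "qfro_norm m n X = 0 \<longleftrightarrow> X = (\<lambda>i j. 0)"
proof
  assume "qfro_norm m n X = 0"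
  then have zero: "(\<Sum>i<m. \<Sum>j<n. qnorm2 (X i j)) = 0"
    unfolding qfro_norm_def by (simp add: sum_nonneg)
  show "X = (\<lambda>i j. 0)"
  proof (intro ext)
    fix i j
    show "X i j = 0"
    proof (cases "i < m \<and> j < n")
      case True
      then show ?thesis using zero by (simp add: sum_nonneg_eq_0_iff sum_nonneg)
    qed (use assms in \<open>auto simp: qmatsD\<close>)
  qed
qed (simp add: qfro_norm_def)

lemma qfro_inner_qsvd_form:
  assumes "n \<le> m"
    and Y: "Y = qmult n (qmult m U1 (qdiag m n a)) (qadj V1)"
    and X: "X = qmult n (qmult m U2 (qdiag m n b)) (qadj V2)"
  shows "qfro_inner m n Y X = (\<Sum>k<n. \<Sum>l<n. a k * b l *
           qre (qmult m (qadj U1) U2 k l * qmult n (qadj V2) V1 l k))"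
proof -
  define P where "P = qmult m (qadj U1) U2"
  define R where "R = qmult n (qadj V2) V1"
  define Z where "Z = qmult m (qmult m (qdiag n m a) (qadj U1)) X"
  have "qfro_inner m n Y X = qtrace_re n (qmult m (qadj Y) X)"
    by (rule qfro_inner_eq_qtrace_re)
  also have "qmult m (qadj Y) X = qmult n V1 Z"
    by (simp add: Y Z_def qadj_qmult qmult_assoc)
  also have "qtrace_re n (qmult n V1 Z) = qtrace_re n (qmult n Z V1)"
    by (rule qtrace_re_qmult_commute)
  also have "qmult n Z V1 = qmult m (qdiag n m a) (qmult n (qmult m P (qdiag m n b)) R)"
    by (simp add: Z_def X P_def R_def qmult_assoc)
  also have "qtrace_re n \<dots> = (\<Sum>k<n. \<Sum>l<n. a k * b l * qre (P k l * R l k))"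
  proof -
    have "qmult m (qdiag n m a) (qmult n (qmult m P (qdiag m n b)) R) k k
        = qreal (a k) * (\<Sum>l<n. P k l * qreal (b l) * R l k)" if "k < n" for k
      using that assms(1)
      by (simp add: qmult_qdiag_left min_def, simp add: qmult_def[of n] qmult_qdiag_right min_def)
    moreover have "qre (p * (qreal y * r)) = y * qre (p * r)" for y p r
      by (simp add: quat_mult_components algebra_simps)
    ultimately show ?thesis
      unfolding qtrace_re_def by (simp add: sum_distrib_left mult.assoc)
  qed
  finally show ?thesis
    by (simp add: P_def R_def)
qed

lemma qfro_inner_self_qsvd_form:
  assumes "n \<le> m" "qunitary m U" "qunitary n V"
  shows "qfro_inner m n (qmult n (qmult m U (qdiag m n a)) (qadj V))
                        (qmult n (qmult m U (qdiag m n a)) (qadj V)) = (\<Sum>k<n. (a k)\<^sup>2)"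
proof -
  have "qfro_inner m n (qmult n (qmult m U (qdiag m n a)) (qadj V))
                        (qmult n (qmult m U (qdiag m n a)) (qadj V))
      = (\<Sum>k<n. \<Sum>l<n. a k * a l * qre (qident m k l * qident n l k))"
    using assms unfolding qunitary_def by (simp add: qfro_inner_qsvd_form)
  also have "\<dots> = (\<Sum>k<n. \<Sum>l<n. a k * a l * of_bool (l = k))"
    using assms(1) by (intro sum.cong refl) (auto simp: qident_def)
  also have "\<dots> = (\<Sum>k<n. (a k)\<^sup>2)"
    by (simp add: power2_eq_square)
  finally show ?thesis .
qed

lemma qfro_norm_qsvd_form:
  assumes "n \<le> m" "qunitary m U" "qunitary n V"
  shows "qfro_norm m n (qmult n (qmult m U (qdiag m n a)) (qadj V)) = sqrt (\<Sum>k<n. (a k)\<^sup>2)"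
proof (rule real_sqrt_unique[symmetric])
  show "0 \<le> qfro_norm m n (qmult n (qmult m U (qdiag m n a)) (qadj V))"
    unfolding qfro_norm_def by (simp add: sum_nonneg)
qed (simp add: qfro_norm_sq qfro_inner_self_qsvd_form[OF assms])

lemma weighted_sum_le_of_partial_sums_le:
  fixes a c d :: "nat \<Rightarrow> real"
  assumes desc: "\<And>i j. i \<le> j \<Longrightarrow> j < n \<Longrightarrow> a j \<le> a i"
    and nonneg: "\<And>i. i < n \<Longrightarrow> 0 \<le> a i"
    and partial: "\<And>p. p < n \<Longrightarrow> (\<Sum>i\<le>p. c i) \<le> (\<Sum>i\<le>p. d i)"
  shows "(\<Sum>i<n. a i * c i) \<le> (\<Sum>i<n. a i * d i)"
proof -
  define e where "e i = c i - d i" for i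
  have partial_e: "(\<Sum>i\<le>p. e i) \<le> 0" if "p < n" for p
    using partial[OF that] by (simp add: e_def sum_subtractf)
  have abel: "(\<Sum>i<Suc k. a i * e i) \<le> a k * (\<Sum>i\<le>k. e i)" if "k < n" for k
    using that
  proof (induction k)
    case (Suc k)
    have "(\<Sum>i<Suc (Suc k). a i * e i) \<le> a k * (\<Sum>i\<le>k. e i) + a (Suc k) * e (Suc k)"
      using Suc by simp
    also have "\<dots> \<le> a (Suc k) * (\<Sum>i\<le>k. e i) + a (Suc k) * e (Suc k)"
      using desc[of k "Suc k"] partial_e[of k] Suc.prems by (simp add: mult_right_mono_neg)
    also have "\<dots> = a (Suc k) * (\<Sum>i\<le>Suc k. e i)"
      by (simp add: distrib_left)
    finally show ?case .
  qed simp
  have "(\<Sum>i<n. a i * e i) \<le> 0"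
  proof (cases n)
    case (Suc k)
    then have "a k * (\<Sum>i\<le>k. e i) \<le> 0"
      using nonneg[of k] partial_e[of k] by (simp add: mult_nonneg_nonpos)
    then show ?thesis
      using abel[of k] Suc by simp
  qed simp
  then show ?thesis
    by (simp add: e_def right_diff_distrib sum_subtractf)
qed

lemma doubly_substochastic_rearrangement:
  fixes a b :: "nat \<Rightarrow> real" and D :: "nat \<Rightarrow> nat \<Rightarrow> real"
  assumes a_desc: "\<And>i j. i \<le> j \<Longrightarrow> j < n \<Longrightarrow> a j \<le> a i"
    and b_desc: "\<And>i j. i \<le> j \<Longrightarrow> j < n \<Longrightarrow> b j \<le> b i"
    and a_nonneg: "\<And>i. i < n \<Longrightarrow> 0 \<le> a i" and b_nonneg: "\<And>i. i < n \<Longrightarrow> 0 \<le> b i"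
    and D_nonneg: "\<And>i j. i < n \<Longrightarrow> j < n \<Longrightarrow> 0 \<le> D i j"
    and row_sums: "\<And>i. i < n \<Longrightarrow> (\<Sum>j<n. D i j) \<le> 1"
    and col_sums: "\<And>j. j < n \<Longrightarrow> (\<Sum>i<n. D i j) \<le> 1"
  shows "(\<Sum>i<n. \<Sum>j<n. a i * b j * D i j) \<le> (\<Sum>i<n. a i * b i)"
proof -
  have block: "(\<Sum>j\<le>q. \<Sum>i\<le>p. D i j) \<le> (\<Sum>j\<le>q. of_bool (j \<le> p))"
    if "p < n" "q < n" for p q
  proof -
    have "(\<Sum>j\<le>q. \<Sum>i\<le>p. D i j) \<le> (\<Sum>i\<le>p. \<Sum>j<n. D i j)"
      using that by (subst sum.swap) (intro sum_mono sum_mono2 D_nonneg; auto)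
    also have "\<dots> \<le> (\<Sum>i\<le>p. 1)"
      using that by (intro sum_mono row_sums) auto
    finally have le_p: "(\<Sum>j\<le>q. \<Sum>i\<le>p. D i j) \<le> real (Suc p)" by simp
    have "(\<Sum>j\<le>q. \<Sum>i\<le>p. D i j) \<le> (\<Sum>j\<le>q. \<Sum>i<n. D i j)"
      using that by (intro sum_mono sum_mono2 D_nonneg) auto
    also have "\<dots> \<le> (\<Sum>j\<le>q. 1)"
      using that by (intro sum_mono col_sums) auto
    finally have le_q: "(\<Sum>j\<le>q. \<Sum>i\<le>p. D i j) \<le> real (Suc q)" by simp
    have "{..q} \<inter> {j. j \<le> p} = {..min p q}" by auto
    then show ?thesis
      using le_p le_q by (simp add: min_def)
  qed
  have rows: "(\<Sum>i\<le>p. \<Sum>j<n. b j * D i j) \<le> (\<Sum>i\<le>p. b i)" if "p < n" for p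
  proof -
    have "(\<Sum>i\<le>p. \<Sum>j<n. b j * D i j) = (\<Sum>j<n. b j * (\<Sum>i\<le>p. D i j))"
      by (simp add: sum_distrib_left) (rule sum.swap)
    also have "\<dots> \<le> (\<Sum>j<n. b j * of_bool (j \<le> p))"
      using b_desc b_nonneg block[OF that] by (rule weighted_sum_le_of_partial_sums_le)
    also have "\<dots> = (\<Sum>i\<le>p. b i)"
    proof -
      have "{..<n} \<inter> {j. j \<le> p} = {..p}"
        using that by auto
      then show ?thesis by simp
    qed
    finally show ?thesis .
  qed
  have "(\<Sum>i<n. \<Sum>j<n. a i * b j * D i j) = (\<Sum>i<n. a i * (\<Sum>j<n. b j * D i j))"
    by (simp add: sum_distrib_left mult.assoc)
  also have "\<dots> \<le> (\<Sum>i<n. a i * b i)"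
    using a_desc a_nonneg rows by (rule weighted_sum_le_of_partial_sums_le)
  finally show ?thesis .
qed

lemma is_qsvdD:
  assumes "is_qsvd m n Y U s V"
  shows "qunitary m U" "qunitary n V" "\<And>i. i < min m n \<Longrightarrow> 0 \<le> s i"
    "\<And>i j. i \<le> j \<Longrightarrow> j < min m n \<Longrightarrow> s j \<le> s i" "\<And>i. min m n \<le> i \<Longrightarrow> s i = 0"
    "Y = qmult n (qmult m U (qdiag m n s)) (qadj V)"
  using assms unfolding is_qsvd_def by auto

text \<open>The weights \<open>(|P\<^sub>k\<^sub>l|\<^sup>2 + |R\<^sub>l\<^sub>k|\<^sup>2) / 2\<close> bound \<open>Re(P\<^sub>k\<^sub>l R\<^sub>l\<^sub>k)\<close> and form a doubly
  substochastic matrix, because \<open>P\<close> and \<open>R\<close> are unitary.\<close>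

theorem von_neumann_trace_inequality:
  assumes "n \<le> m" "is_qsvd m n Y U1 a V1" "is_qsvd m n X U2 b V2"
  shows "qfro_inner m n Y X \<le> (\<Sum>k<n. a k * b k)"
proof -
  note Y = is_qsvdD[OF assms(2)] and X = is_qsvdD[OF assms(3)]
  define P where "P = qmult m (qadj U1) U2"
  define R where "R = qmult n (qadj V2) V1"
  define D where "D k l = (qnorm2 (P k l) + qnorm2 (R l k)) / 2" for k l
  have mn: "min m n = n" using assms(1) by simp
  have P: "qunitary m P" unfolding P_def by (intro qunitary_qmult qunitary_qadj Y X)
  have R: "qunitary n R" unfolding R_def by (intro qunitary_qmult qunitary_qadj Y X)
  have sub_row: "(\<Sum>j<n. qnorm2 (P i j)) \<le> 1" and sub_col: "(\<Sum>j<n. qnorm2 (P j i)) \<le> 1"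
    if "i < n" for i
  proof -
    have "(\<Sum>j<n. qnorm2 (P i j)) \<le> (\<Sum>j<m. qnorm2 (P i j))"
      "(\<Sum>j<n. qnorm2 (P j i)) \<le> (\<Sum>j<m. qnorm2 (P j i))"
      using assms(1) by (intro sum_mono2; simp)+
    then show "(\<Sum>j<n. qnorm2 (P i j)) \<le> 1" "(\<Sum>j<n. qnorm2 (P j i)) \<le> 1"
      using qunitary_row_norm[OF P] qunitary_col_norm[OF P] that assms(1) by simp_all
  qed
  have "qfro_inner m n Y X = (\<Sum>k<n. \<Sum>l<n. a k * b l * qre (P k l * R l k))"
    unfolding P_def R_def by (rule qfro_inner_qsvd_form[OF assms(1) Y(6) X(6)])
  also have "\<dots> \<le> (\<Sum>k<n. \<Sum>l<n. a k * b l * D k l)"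
  proof (intro sum_mono mult_left_mono)
    fix k l assume "k \<in> {..<n}" "l \<in> {..<n}"
    then show "0 \<le> a k * b l" using Y(3) X(3) mn by simp
    show "qre (P k l * R l k) \<le> D k l"
      using qre_qcnj_mult_le[of "qcnj (P k l)" "R l k"] unfolding D_def by simp
  qed
  also have "\<dots> \<le> (\<Sum>k<n. a k * b k)"
  proof (rule doubly_substochastic_rearrangement)
    show "(\<Sum>l<n. D k l) \<le> 1" if "k < n" for k
      using sub_row[OF that] qunitary_col_norm[OF R that]
      unfolding D_def by (simp add: sum_divide_distrib[symmetric] sum.distrib)
    show "(\<Sum>k<n. D k l) \<le> 1" if "l < n" for l
      using sub_col[OF that] qunitary_row_norm[OF R that]
      unfolding D_def by (simp add: sum_divide_distrib[symmetric] sum.distrib)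
  qed (use Y X mn in \<open>auto simp: D_def\<close>)
  finally show ?thesis .
qed

theorem mirsky_inequality:
  assumes "n \<le> m" "is_qsvd m n Y U1 a V1" "is_qsvd m n X U2 b V2"
  shows "(\<Sum>k<n. (a k - b k)\<^sup>2) \<le> (qfro_norm m n (qmat_diff Y X))\<^sup>2"
proof -
  note Y = is_qsvdD[OF assms(2)] and X = is_qsvdD[OF assms(3)]
  have "(qfro_norm m n (qmat_diff Y X))\<^sup>2 = (\<Sum>k<n. (a k)\<^sup>2) + (\<Sum>k<n. (b k)\<^sup>2) - 2 * qfro_inner m n Y X"
    using qfro_inner_self_qsvd_form[OF assms(1) Y(1,2), of a, folded Y(6)]
      qfro_inner_self_qsvd_form[OF assms(1) X(1,2), of b, folded X(6)]
    by (simp add: qfro_norm_sq qfro_inner_diff_self)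
  moreover have "(\<Sum>k<n. (a k - b k)\<^sup>2) = (\<Sum>k<n. (a k)\<^sup>2) + (\<Sum>k<n. (b k)\<^sup>2) - 2 * (\<Sum>k<n. a k * b k)"
    by (simp add: power2_diff sum.distrib sum_subtractf sum_distrib_left mult.assoc)
  ultimately show ?thesis
    using von_neumann_trace_inequality[OF assms] by simp
qed

lemma is_qsvd_singvals_unique:
  assumes "n \<le> m" "is_qsvd m n Y U1 a V1" "is_qsvd m n Y U2 b V2" "k < n"
  shows "a k = b k"
proof -
  have "qmat_diff Y Y = (\<lambda>i j. 0)"
    unfolding qmat_diff_def by simp
  then have "(\<Sum>k<n. (a k - b k)\<^sup>2) = 0"
    using mirsky_inequality[OF assms(1-3)] by (simp add: qfro_norm_def antisym sum_nonneg)
  then have "(a k - b k)\<^sup>2 = 0"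
    using assms(4) by (simp add: sum_nonneg_eq_0_iff)
  then show ?thesis by simp
qed

section \<open>Existence of the quaternion SVD\<close>

definition qvec_norm2 :: "nat \<Rightarrow> (nat \<Rightarrow> quat) \<Rightarrow> real" where
  "qvec_norm2 k u = (\<Sum>i<k. qnorm2 (u i))"

definition qvec_inner :: "nat \<Rightarrow> (nat \<Rightarrow> quat) \<Rightarrow> (nat \<Rightarrow> quat) \<Rightarrow> quat" where
  "qvec_inner k u w = (\<Sum>i<k. qcnj (u i) * w i)"

definition qmat_vec :: "nat \<Rightarrow> qmat \<Rightarrow> (nat \<Rightarrow> quat) \<Rightarrow> nat \<Rightarrow> quat" where
  "qmat_vec k A v = (\<lambda>i. \<Sum>j<k. A i j * v j)"

definition qbilin :: "nat \<Rightarrow> nat \<Rightarrow> qmat \<Rightarrow> (nat \<Rightarrow> quat) \<Rightarrow> (nat \<Rightarrow> quat) \<Rightarrow> quat" where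
  "qbilin m n X u v = qvec_inner m u (qmat_vec n X v)"

lemma qvec_norm2_nonneg [simp]: "0 \<le> qvec_norm2 k u"
  unfolding qvec_norm2_def by (simp add: sum_nonneg)

lemma qvec_norm2_eq_0D: "qvec_norm2 k u = 0 \<Longrightarrow> i < k \<Longrightarrow> u i = 0"
  unfolding qvec_norm2_def by (simp add: sum_nonneg_eq_0_iff)

lemma qre_qvec_inner_self: "qre (qvec_inner k u u) = qvec_norm2 k u"
  unfolding qvec_inner_def qvec_norm2_def by (simp add: qcnj_mult_self)

lemma qre_qvec_inner_commute: "qre (qvec_inner k u w) = qre (qvec_inner k w u)"
  unfolding qvec_inner_def by (simp add: qre_qcnj_mult_commute[of "u _"])

lemma qvec_norm2_diff:
  "qvec_norm2 k (\<lambda>i. u i - w i) = qvec_norm2 k u + qvec_norm2 k w - 2 * qre (qvec_inner k u w)"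
  unfolding qvec_norm2_def qvec_inner_def qnorm2_diff
  by (simp add: sum.distrib sum_subtractf sum_distrib_left)

lemma qvec_inner_scale_right: "qvec_inner k u (\<lambda>i. w i * qreal c) = qvec_inner k u w * qreal c"
  unfolding qvec_inner_def by (simp add: sum_distrib_right mult.assoc)

lemma qvec_inner_scale_left: "qvec_inner k (\<lambda>i. u i * qreal c) w = qreal c * qvec_inner k u w"
  unfolding qvec_inner_def by (simp add: sum_distrib_left qcnj_mult mult.assoc)

lemma qvec_norm2_scale: "qvec_norm2 k (\<lambda>i. u i * qreal c) = c\<^sup>2 * qvec_norm2 k u"
  unfolding qvec_norm2_def by (simp add: qnorm2_mult sum_distrib_left mult.commute)

lemma qbilin_cong:
  "(\<And>i. i < m \<Longrightarrow> u i = u' i) \<Longrightarrow> (\<And>j. j < n \<Longrightarrow> v j = v' j) \<Longrightarrow> qbilin m n X u v = qbilin m n X u' v'"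
  unfolding qbilin_def qvec_inner_def qmat_vec_def by simp

lemma qre_qbilin: "qre (qbilin m n X u v) = (\<Sum>i<m. \<Sum>j<n. qre (qcnj (u i) * (X i j * v j)))"
  unfolding qbilin_def qvec_inner_def qmat_vec_def by (simp add: sum_distrib_left)

lemma qbilin_qadj: "qbilin m n X u v = qvec_inner n (qmat_vec m (qadj X) u) v"
  unfolding qbilin_def qvec_inner_def qmat_vec_def qadj_def
  by (simp add: sum_distrib_left sum_distrib_right qcnj_mult mult.assoc) (rule sum.swap)

lemma qbilin_cols: "qbilin m n X (\<lambda>l. U l i) (\<lambda>l. V l j) = qmult n (qmult m (qadj U) X) V i j"
  unfolding qbilin_def qvec_inner_def qmat_vec_def qmult_def qadj_def
  by (simp add: sum_distrib_left sum_distrib_right mult.assoc) (rule sum.swap)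

lemma qunitary_col_inner: "qunitary n U \<Longrightarrow> qvec_inner n (\<lambda>l. U l i) (\<lambda>l. U l j) = qident n i j"
  unfolding qvec_inner_def by (rule qunitary_cols_orthonormal)

lemma qunitary_col_qvec_norm2: "qunitary n U \<Longrightarrow> j < n \<Longrightarrow> qvec_norm2 n (\<lambda>l. U l j) = 1"
  unfolding qvec_norm2_def by (rule qunitary_col_norm)

text \<open>The equality case of the Cauchy-Schwarz inequality.\<close>

lemma qvec_inner_max_unit:
  assumes u: "qvec_norm2 k u = 1"
    and max: "\<And>u'. qvec_norm2 k u' = 1 \<Longrightarrow> qre (qvec_inner k u' w) \<le> qre (qvec_inner k u w)"
    and "i < k"
  shows "w i = u i * qreal (qre (qvec_inner k u w))"
proof (cases "qvec_norm2 k w = 0")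
  case True
  then have "qvec_inner k u w = 0"
    unfolding qvec_inner_def by (simp add: qvec_norm2_eq_0D)
  then show ?thesis
    using True \<open>i < k\<close> by (simp add: qvec_norm2_eq_0D)
next
  case False
  define t where "t = sqrt (qvec_norm2 k w)"
  have t: "t > 0" "t\<^sup>2 = qvec_norm2 k w"
    using False by (auto simp: t_def order_le_neq_trans)
  define u' where "u' i = w i * qreal (1 / t)" for i
  have u': "qvec_norm2 k u' = 1"
    using t False unfolding u'_def qvec_norm2_scale by (simp add: power_divide)
  have "t = qre (qvec_inner k u' w)"
    using t unfolding u'_def qvec_inner_scale_left
    by (simp add: qre_qvec_inner_self power2_eq_square field_simps flip: t(2))
  also have "\<dots> \<le> qre (qvec_inner k u w)"
    by (rule max[OF u'])
  finally have "t \<le> qre (qvec_inner k u w)" .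
  have dist: "qvec_norm2 k (\<lambda>i. u i - u' i) = 2 - 2 * (qre (qvec_inner k u w) / t)"
    using u u' unfolding qvec_norm2_diff u'_def qvec_inner_scale_right by simp
  then have "qre (qvec_inner k u w) / t \<le> 1"
    using qvec_norm2_nonneg[of k "\<lambda>i. u i - u' i"] by linarith
  with \<open>t \<le> qre (qvec_inner k u w)\<close> have re: "qre (qvec_inner k u w) = t"
    using t(1) by (simp add: divide_le_eq)
  with dist have "qvec_norm2 k (\<lambda>i. u i - u' i) = 0"
    using t(1) by simp
  then have "u i = w i * qreal (1 / t)"
    using \<open>i < k\<close> unfolding u'_def by (auto dest: qvec_norm2_eq_0D)
  then show ?thesis
    using t re by (simp add: mult.assoc flip: qreal_simps(4))
qed

lemma quat_polar:
  obtains q where "qnorm2 q = 1" "p = q * qreal (sqrt (qnorm2 p))"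
proof (cases "p = 0")
  case False
  let ?r = "sqrt (qnorm2 p)"
  have "?r \<noteq> 0"
    using False by simp
  then have "qnorm2 (p * qreal (1 / ?r)) = 1" "p = p * qreal (1 / ?r) * qreal ?r"
    by (simp_all add: qnorm2_mult power_divide mult.assoc flip: qreal_simps(4))
  then show thesis
    by (rule that)
qed (auto intro: that[of 1])

lemma qunitary_qdiag_units:
  assumes "\<And>i. i < k \<Longrightarrow> qnorm2 (d i) = 1"
  shows "qunitary k (\<lambda>i j. if i = j \<and> i < k then d i else 0)"
proof -
  let ?D = "\<lambda>i j. if i = j \<and> i < k then d i else 0"
  have "qmult k (qadj ?D) ?D i j = qident k i j" "qmult k ?D (qadj ?D) i j = qident k i j" for i j
    using assms
    by (cases "i < k"; auto simp: qmult_def qadj_def qident_def qcnj_mult_self mult_qcnj_self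
        if_distrib[where f="\<lambda>x. x * _"] if_distrib[where f="\<lambda>x. _ * x"] if_distrib[where f=qcnj]
        cong: if_cong)+
  then show ?thesis
    unfolding qunitary_def by (auto intro!: qmatsI ext)
qed

text \<open>A quaternionic Householder reflection \<open>I - w w\<^sup>* / c\<close> with \<open>|w|\<^sup>2 = 2c\<close>; for
  \<open>c = 0\<close> it degenerates to the identity because \<open>1 / 0 = 0\<close>.\<close>

lemma qunitary_reflection:
  fixes w :: "nat \<Rightarrow> quat" and c :: real
  assumes ww: "(\<Sum>l<m. qcnj (w l) * w l) = qreal (2 * c)"
  defines "H \<equiv> \<lambda>i j. if i < m \<and> j < m then qident m i j - qreal (1/c) * (w i * qcnj (w j)) else 0"
  shows "qunitary m H"
proof -
  have adj: "qadj H = H"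
    unfolding H_def qadj_def qident_def by (auto intro!: ext simp: qcnj_mult qreal_mult_commute)
  have sq: "qmult m H H i j = qident m i j" for i j
  proof (cases "i < m \<and> j < m")
    case True
    let ?s = "qreal (1/c)"
    have "qmult m H H i j = (\<Sum>l<m. (qident m i l - ?s * (w i * qcnj (w l))) * (qident m l j - ?s * (w l * qcnj (w j))))"
      unfolding qmult_def H_def using True by (intro sum.cong) auto
    also have "\<dots> = (\<Sum>l<m. qident m i l * qident m l j) - (\<Sum>l<m. qident m i l * (?s * (w l * qcnj (w j))))
        - (\<Sum>l<m. ?s * (w i * qcnj (w l)) * qident m l j) + (\<Sum>l<m. ?s * (w i * qcnj (w l)) * (?s * (w l * qcnj (w j))))"
      by (simp add: algebra_simps sum.distrib sum_subtractf)
    also have "(\<Sum>l<m. qident m i l * qident m l j) = qident m i j"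
      using True by (simp add: qident_def if_distrib[where f="\<lambda>x. x * _"] cong: if_cong)
    also have "(\<Sum>l<m. qident m i l * (?s * (w l * qcnj (w j)))) = ?s * (w i * qcnj (w j))"
      using True by (simp add: qident_def if_distrib[where f="\<lambda>x. x * _"] cong: if_cong)
    also have "(\<Sum>l<m. ?s * (w i * qcnj (w l)) * qident m l j) = ?s * (w i * qcnj (w j))"
      using True by (simp add: qident_def if_distrib[where f="\<lambda>x. _ * x"] cong: if_cong)
    also have "(\<Sum>l<m. ?s * (w i * qcnj (w l)) * (?s * (w l * qcnj (w j))))
        = ?s * ?s * (w i * (\<Sum>l<m. qcnj (w l) * w l) * qcnj (w j))"
    proof -
      have "?s * (w i * qcnj (w l)) * (?s * (w l * qcnj (w j))) = ?s * ?s * (w i * (qcnj (w l) * w l) * qcnj (w j))"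
        for l by (simp add: quat_eq_iff quat_mult_components algebra_simps)
      then show ?thesis
        by (simp add: sum_distrib_left sum_distrib_right)
    qed
    also have "\<dots> = ?s * (w i * qcnj (w j)) + ?s * (w i * qcnj (w j))"
    proof -
      have scalar: "1/c * (1/c) * (2 * c) = 1/c + 1/c"
        by (cases "c = 0") (simp_all add: field_simps)
      have "?s * ?s * (x * qreal (2 * c) * y) = qreal (1/c * (1/c) * (2 * c)) * (x * y)" for x y
        by (simp add: quat_eq_iff quat_mult_components algebra_simps)
      then show ?thesis
        unfolding ww scalar by (simp only: qreal_simps(3) distrib_right)
    qed
    finally show ?thesis
      by simp
  qed (auto simp: qmult_def H_def qident_def)
  show ?thesis
    unfolding qunitary_def using adj sq by (auto intro!: qmatsI ext simp: H_def)
qed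

lemma qunitary_with_first_col:
  assumes u: "qvec_norm2 m u = 1"
  obtains P where "qunitary m P" "\<And>i. i < m \<Longrightarrow> P i 0 = u i"
proof -
  have m: "0 < m"
    using u by (rule contrapos_pp) (simp add: qvec_norm2_def)
  define r where "r = sqrt (qnorm2 (u 0))"
  obtain q where q: "qnorm2 q = 1" and u0: "u 0 = q * qreal r"
    unfolding r_def by (rule quat_polar)
  define c where "c = 1 - r"
  define w where "w i = u i - (if i = 0 then q else 0)" for i
  have "qvec_norm2 m w = 2 * c"
  proof -
    have "qvec_norm2 m (\<lambda>i. if i = 0 then q else 0) = 1"
      using m q by (simp add: qvec_norm2_def if_distrib[where f=qnorm2] cong: if_cong)
    moreover have "qre (qvec_inner m u (\<lambda>i. if i = 0 then q else 0)) = r"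
      using m q by (simp add: qvec_inner_def u0 qcnj_mult mult.assoc qcnj_mult_self
          if_distrib[where f="\<lambda>x. _ * x"] cong: if_cong)
    ultimately show ?thesis
      using u unfolding w_def qvec_norm2_diff c_def by simp
  qed
  then have ww: "(\<Sum>l<m. qcnj (w l) * w l) = qreal (2 * c)"
    by (simp add: qvec_norm2_def qcnj_mult_self flip: qreal_sum)
  define H where "H i j = (if i < m \<and> j < m then qident m i j - qreal (1/c) * (w i * qcnj (w j)) else 0)" for i j
  define D where "D i j = (if i = j \<and> i < m then (if i = 0 then q else 1) else 0)" for i j
  have H: "qunitary m H"
    unfolding H_def using ww by (rule qunitary_reflection)
  have D: "qunitary m D"
    unfolding D_def using q by (intro qunitary_qdiag_units) simp
  have "qmult m H D i 0 = u i" if "i < m" for i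
  proof -
    have w0: "qcnj (w 0) = - (qreal c * qcnj q)"
      unfolding w_def by (simp add: u0 c_def quat_eq_iff quat_mult_components algebra_simps)
    have "qreal (1/c) * (w i * qcnj (w 0)) = - (w i * qcnj q)"
    proof (cases "c = 0")
      case True
      then have "(\<Sum>l<m. qnorm2 (w l)) = 0"
        using ww by (simp add: qcnj_mult_self flip: qreal_sum)
      then have "w i = 0"
        using that by (simp add: sum_nonneg_eq_0_iff)
      then show ?thesis by simp
    next
      case False
      have "qreal (1/c) * (x * (qreal c * y)) = qreal (1/c * c) * (x * y)" for x y
        by (simp add: quat_eq_iff quat_mult_components algebra_simps)
      then show ?thesis
        using False by (simp add: w0)
    qed
    then have "H i 0 = qident m i 0 + w i * qcnj q"
      using that m by (simp add: H_def)
    moreover have "qmult m H D i 0 = H i 0 * q"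
      using m by (simp add: qmult_def D_def if_distrib[where f="\<lambda>x. _ * x"] cong: if_cong)
    moreover have "qcnj q * q = 1"
      using q by (simp add: qcnj_mult_self)
    ultimately show ?thesis
      using m by (cases "i = 0") (simp_all add: qident_def w_def distrib_right mult.assoc)
  qed
  then show thesis
    using that[OF qunitary_qmult[OF H D]] by blast
qed

text \<open>Quaternion vectors of length \<open>k\<close> are encoded by their \<open>4k\<close> real coordinates, so that
  the unit spheres become closed subsets of the compact box \<open>[-1, 1]\<^sup>4\<^sup>k\<close> in the product
  topology on \<open>nat \<Rightarrow> real\<close>.\<close>

definition qvec_of_coords :: "(nat \<Rightarrow> real) \<Rightarrow> nat \<Rightarrow> quat" where
  "qvec_of_coords x i = Quat (x (4*i)) (x (4*i+1)) (x (4*i+2)) (x (4*i+3))"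

definition coords_of_qvec :: "nat \<Rightarrow> (nat \<Rightarrow> quat) \<Rightarrow> nat \<Rightarrow> real" where
  "coords_of_qvec k u l = (if l < 4*k then ([qre, qi, qj, qk] ! (l mod 4)) (u (l div 4)) else 0)"

definition coord_box :: "nat \<Rightarrow> (nat \<Rightarrow> real) set" where
  "coord_box N = PiE UNIV (\<lambda>l. if l < N then {-1..1} else {0})"

lemma qvec_of_coords_components [simp]:
  "qre (qvec_of_coords x i) = x (4*i)" "qi (qvec_of_coords x i) = x (4*i+1)"
  "qj (qvec_of_coords x i) = x (4*i+2)" "qk (qvec_of_coords x i) = x (4*i+3)"
  by (simp_all add: qvec_of_coords_def)

lemma qvec_of_coords_of_qvec: "i < k \<Longrightarrow> qvec_of_coords (coords_of_qvec k u) i = u i"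
proof -
  have "(4*i + r) div 4 = i" "(4*i + r) mod 4 = r" if "r < 4" for r
    using that by simp_all
  from this[of 1] this[of 2] this[of 3]
  show "i < k \<Longrightarrow> qvec_of_coords (coords_of_qvec k u) i = u i"
    by (simp add: quat_eq_iff coords_of_qvec_def)
qed

lemma compact_coord_box: "compact (coord_box N)"
proof -
  have "compactin (product_topology (\<lambda>l. euclidean) UNIV) (coord_box N)"
    unfolding coord_box_def by (subst compactin_PiE) auto
  then show ?thesis
    by (simp add: euclidean_product_topology)
qed

lemma coords_of_unit_qvec_in_box:
  assumes "qvec_norm2 k u = 1"
  shows "coords_of_qvec k u \<in> coord_box (4*k)"
proof -
  have bound: "\<bar>f (u i)\<bar> \<le> 1" if "f \<in> {qre, qi, qj, qk}" "i < k" for f i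
  proof -
    have "(f (u i))\<^sup>2 \<le> qnorm2 (u i)"
      using that(1) by (auto simp: qnorm2_def)
    also have "qnorm2 (u i) \<le> qvec_norm2 k u"
      unfolding qvec_norm2_def using that(2) by (intro member_le_sum) auto
    finally show ?thesis
      using assms by (simp add: abs_square_le_1)
  qed
  have "\<bar>coords_of_qvec k u l\<bar> \<le> 1" if "l < 4*k" for l
  proof -
    have "[qre, qi, qj, qk] ! (l mod 4) \<in> {qre, qi, qj, qk}"
      using nth_mem[of "l mod 4" "[qre, qi, qj, qk]"] by simp
    then show ?thesis
      using that bound[of _ "l div 4"] by (simp add: coords_of_qvec_def)
  qed
  then show ?thesis
    by (auto simp: coord_box_def coords_of_qvec_def abs_le_iff)
qed

lemma continuous_on_fst_coordinate [continuous_intros]: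
  "continuous_on S (\<lambda>p::(nat \<Rightarrow> real) \<times> 'b::topological_space. fst p l)"
  using continuous_on_product_coordinates[of l] continuous_on_fst[OF continuous_on_id, of S]
  by (rule continuous_on_compose2) simp

lemma continuous_on_snd_coordinate [continuous_intros]:
  "continuous_on S (\<lambda>p::'a::topological_space \<times> (nat \<Rightarrow> real). snd p l)"
  using continuous_on_product_coordinates[of l] continuous_on_snd[OF continuous_on_id, of S]
  by (rule continuous_on_compose2) simp

lemma qbilin_max_exists:
  assumes "0 < m" "0 < n"
  obtains u v where "qvec_norm2 m u = 1" "qvec_norm2 n v = 1"
    "\<And>u' v'. qvec_norm2 m u' = 1 \<Longrightarrow> qvec_norm2 n v' = 1 \<Longrightarrow> qre (qbilin m n X u' v') \<le> qre (qbilin m n X u v)"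
proof -
  define S where "S = (coord_box (4*m) \<times> coord_box (4*n))
    \<inter> {p. qvec_norm2 m (qvec_of_coords (fst p)) = 1} \<inter> {p. qvec_norm2 n (qvec_of_coords (snd p)) = 1}"
  define F where "F p = qre (qbilin m n X (qvec_of_coords (fst p)) (qvec_of_coords (snd p)))" for p
  have coords_in_S: "(coords_of_qvec m u, coords_of_qvec n v) \<in> S"
    if "qvec_norm2 m u = 1" "qvec_norm2 n v = 1" for u v
  proof -
    have "qvec_norm2 m (qvec_of_coords (coords_of_qvec m u)) = qvec_norm2 m u"
      "qvec_norm2 n (qvec_of_coords (coords_of_qvec n v)) = qvec_norm2 n v"
      by (simp_all add: qvec_norm2_def qvec_of_coords_of_qvec)
    then show ?thesis
      unfolding S_def using that coords_of_unit_qvec_in_box by auto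
  qed
  have F_coords: "F (coords_of_qvec m u, coords_of_qvec n v) = qre (qbilin m n X u v)" for u v
    unfolding F_def by (simp add: qvec_of_coords_of_qvec cong: qbilin_cong)
  define e :: "nat \<Rightarrow> quat" where "e i = (if i = 0 then 1 else 0)" for i
  have "qvec_norm2 k e = 1" if "0 < k" for k
    using that by (simp add: qvec_norm2_def e_def if_distrib[where f=qnorm2] cong: if_cong)
  then have "S \<noteq> {}"
    using coords_in_S assms by blast
  moreover have "compact S"
    unfolding S_def qvec_norm2_def qnorm2_def qvec_of_coords_components
    by (intro compact_Int_closed compact_Times compact_coord_box closed_Collect_eq continuous_intros)
  moreover have "continuous_on S F"
    unfolding F_def qre_qbilin by (simp add: quat_mult_components qvec_of_coords_def) (intro continuous_intros)
  ultimately obtain p where p: "p \<in> S" "\<And>p'. p' \<in> S \<Longrightarrow> F p' \<le> F p"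
    using continuous_attains_sup[of S F] by blast
  show thesis
  proof (rule that)
    show "qvec_norm2 m (qvec_of_coords (fst p)) = 1" "qvec_norm2 n (qvec_of_coords (snd p)) = 1"
      using p(1) unfolding S_def by auto
    show "qre (qbilin m n X u' v') \<le> qre (qbilin m n X (qvec_of_coords (fst p)) (qvec_of_coords (snd p)))"
      if "qvec_norm2 m u' = 1" "qvec_norm2 n v' = 1" for u' v'
      using p(2)[OF coords_in_S[OF that]] unfolding F_coords by (simp add: F_def)
  qed
qed

definition qblock :: "quat \<Rightarrow> qmat \<Rightarrow> qmat" where
  "qblock c A = (\<lambda>i j. if i = 0 then (if j = 0 then c else 0) else if j = 0 then 0 else A (i - 1) (j - 1))"

lemma qblock_simps [simp]:
  "qblock c A 0 0 = c" "qblock c A 0 (Suc j) = 0" "qblock c A (Suc i) 0 = 0"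
  "qblock c A (Suc i) (Suc j) = A i j"
  by (simp_all add: qblock_def)

lemma qblock_qmult: "qmult (Suc k) (qblock c A) (qblock d B) = qblock (c * d) (qmult k A B)"
proof (intro ext)
  fix i j
  show "qmult (Suc k) (qblock c A) (qblock d B) i j = qblock (c * d) (qmult k A B) i j"
    by (cases i; cases j) (simp_all add: qmult_def sum.lessThan_Suc_shift del: sum.lessThan_Suc)
qed

lemma qadj_qblock: "qadj (qblock c A) = qblock (qcnj c) (qadj A)"
  unfolding qadj_def qblock_def by (auto intro!: ext)

lemma qident_Suc: "qident (Suc k) = qblock 1 (qident k)"
proof (intro ext)
  fix i j
  show "qident (Suc k) i j = qblock 1 (qident k) i j"
    by (cases i; cases j) (simp_all add: qident_def)
qed

lemma qdiag_Suc: "qdiag (Suc m) (Suc n) (case_nat c s) = qblock (qreal c) (qdiag m n s)"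
proof (intro ext)
  fix i j
  show "qdiag (Suc m) (Suc n) (case_nat c s) i j = qblock (qreal c) (qdiag m n s) i j"
    by (cases i; cases j) (simp_all add: qdiag_def)
qed

lemma qblock_qmats:
  assumes "A \<in> qmats m n"
  shows "qblock c A \<in> qmats (Suc m) (Suc n)"
proof (rule qmatsI)
  fix i j
  assume "Suc m \<le> i \<or> Suc n \<le> j"
  then show "qblock c A i j = 0"
    by (cases i; cases j) (auto intro: qmatsD[OF assms])
qed

lemma qunitary_qblock: "qunitary k A \<Longrightarrow> qunitary (Suc k) (qblock 1 A)"
  unfolding qunitary_def by (simp add: qblock_qmats qadj_qblock qblock_qmult qident_Suc)

lemma qblock_qsvd_form:
  "qblock (qreal c) (qmult n (qmult m U (qdiag m n s)) (qadj V))
     = qmult (Suc n) (qmult (Suc m) (qblock 1 U) (qdiag (Suc m) (Suc n) (case_nat c s))) (qadj (qblock 1 V))"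
  by (simp add: qdiag_Suc qadj_qblock qblock_qmult)

lemma is_qsvd_qblock:
  assumes "is_qsvd m n X U s V" "0 \<le> c" "0 < min m n \<Longrightarrow> s 0 \<le> c"
  shows "is_qsvd (Suc m) (Suc n) (qblock (qreal c) X) (qblock 1 U) (case_nat c s) (qblock 1 V)"
proof -
  note X = is_qsvdD[OF assms(1)]
  have "case_nat c s j \<le> case_nat c s i" if "i \<le> j" "j < Suc (min m n)" for i j
    using that X(4)[of 0 "j - 1"] X(4)[of "i - 1" "j - 1"] assms(3)
    by (cases i; cases j) force+
  moreover have "0 \<le> case_nat c s i" if "i < Suc (min m n)" for i
    using that X(3) assms(2) by (cases i) auto
  moreover have "case_nat c s i = 0" if "Suc (min m n) \<le> i" for i
    using that X(5) by (cases i) auto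
  ultimately show ?thesis
    unfolding is_qsvd_def using X(1,2,6) by (simp add: qunitary_qblock qblock_qsvd_form)
qed

lemma is_qsvd_unitary_transform:
  assumes "is_qsvd m n X U s V" "qunitary m P" "qunitary n Q"
  shows "is_qsvd m n (qmult n (qmult m P X) (qadj Q)) (qmult m P U) s (qmult n Q V)"
  using assms unfolding is_qsvd_def
  by (simp add: qunitary_qmult qadj_qmult qmult_assoc)

lemma qbilin_qsvd_form_cols:
  assumes "qunitary m U" "qunitary n V" "k < min m n"
  shows "qbilin m n (qmult n (qmult m U (qdiag m n s)) (qadj V)) (\<lambda>l. U l k) (\<lambda>l. V l k) = qreal (s k)"
  using assms qunitary_conjugate_cancel(2)[OF assms(1,2) qdiag_qmats, of s]
  by (simp add: qbilin_cols qdiag_def)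

lemma qblock_of_singular_pair:
  assumes P: "qunitary (Suc m) P" and Q: "qunitary (Suc n) Q" and X: "X \<in> qmats (Suc m) (Suc n)"
    and Pu: "\<And>i. i < Suc m \<Longrightarrow> P i 0 = u i" and Qv: "\<And>j. j < Suc n \<Longrightarrow> Q j 0 = v j"
    and Xv: "\<And>i. i < Suc m \<Longrightarrow> qmat_vec (Suc n) X v i = u i * qreal \<sigma>"
    and Xu: "\<And>j. j < Suc n \<Longrightarrow> qmat_vec (Suc m) (qadj X) u j = v j * qreal \<sigma>"
  defines "Z \<equiv> qmult (Suc n) (qmult (Suc m) (qadj P) X) Q"
  shows "Z = qblock (qreal \<sigma>) (\<lambda>i j. Z (Suc i) (Suc j))"
proof -
  have Z: "Z \<in> qmats (Suc m) (Suc n)"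
    unfolding Z_def by (intro qmult_qmats qadj_qmats qunitary_qmats P Q X)
  have Z_col: "Z i 0 = qident (Suc m) i 0 * qreal \<sigma>" for i
  proof (cases "i < Suc m")
    case True
    have "Z i 0 = qbilin (Suc m) (Suc n) X (\<lambda>l. P l i) v"
      unfolding Z_def qbilin_cols[symmetric] using Qv by (intro qbilin_cong) auto
    also have "\<dots> = qvec_inner (Suc m) (\<lambda>l. P l i) (\<lambda>l. P l 0 * qreal \<sigma>)"
      unfolding qbilin_def qvec_inner_def using Xv Pu by simp
    finally show ?thesis
      using P by (simp add: qvec_inner_scale_right qunitary_col_inner)
  qed (use Z in \<open>simp add: qmatsD qident_def\<close>)
  have Z_row: "Z 0 j = qreal \<sigma> * qident (Suc n) 0 j" for j
  proof (cases "j < Suc n")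
    case True
    have "Z 0 j = qbilin (Suc m) (Suc n) X u (\<lambda>l. Q l j)"
      unfolding Z_def qbilin_cols[symmetric] using Pu by (intro qbilin_cong) auto
    also have "\<dots> = qvec_inner (Suc n) (\<lambda>l. Q l 0 * qreal \<sigma>) (\<lambda>l. Q l j)"
      unfolding qbilin_qadj qvec_inner_def using Xu Qv by simp
    finally show ?thesis
      using Q by (simp add: qvec_inner_scale_left qunitary_col_inner)
  qed (use Z in \<open>simp add: qmatsD qident_def\<close>)
  show ?thesis
  proof (intro ext)
    fix i j
    show "Z i j = qblock (qreal \<sigma>) (\<lambda>i j. Z (Suc i) (Suc j)) i j"
      by (cases i; cases j) (simp_all add: Z_col Z_row qident_def)
  qed
qed

text \<open>One deflation step: for a maximising pair \<open>(u, v)\<close> of \<open>Re u\<^sup>* X v\<close> with value \<open>\<sigma>\<close>,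
  the first-order conditions \<open>X v = \<sigma> u\<close> and \<open>X\<^sup>* u = \<sigma> v\<close> make \<open>\<sigma>\<close> split off as a
  diagonal block once \<open>u\<close> and \<open>v\<close> are completed to unitary matrices.\<close>

lemma qsvd_deflation:
  assumes X: "X \<in> qmats (Suc m) (Suc n)"
  obtains P Q \<sigma> X' where "qunitary (Suc m) P" "qunitary (Suc n) Q" "0 \<le> \<sigma>" "X' \<in> qmats m n"
    "X = qmult (Suc n) (qmult (Suc m) P (qblock (qreal \<sigma>) X')) (qadj Q)"
    "\<And>u v. qvec_norm2 (Suc m) u = 1 \<Longrightarrow> qvec_norm2 (Suc n) v = 1 \<Longrightarrow>
       qre (qbilin (Suc m) (Suc n) X u v) \<le> \<sigma>"
proof -
  obtain u v where u: "qvec_norm2 (Suc m) u = 1" and v: "qvec_norm2 (Suc n) v = 1"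
    and max: "\<And>u' v'. qvec_norm2 (Suc m) u' = 1 \<Longrightarrow> qvec_norm2 (Suc n) v' = 1 \<Longrightarrow>
      qre (qbilin (Suc m) (Suc n) X u' v') \<le> qre (qbilin (Suc m) (Suc n) X u v)"
    using qbilin_max_exists[of "Suc m" "Suc n" X] by blast
  define \<sigma> where "\<sigma> = qre (qbilin (Suc m) (Suc n) X u v)"
  have Xv: "qmat_vec (Suc n) X v i = u i * qreal \<sigma>" if "i < Suc m" for i
    using qvec_inner_max_unit[OF u _ that] max[OF _ v] unfolding \<sigma>_def qbilin_def by blast
  have re: "qre (qvec_inner (Suc n) v' (qmat_vec (Suc m) (qadj X) u)) = qre (qbilin (Suc m) (Suc n) X u v')"
    for v' by (simp add: qbilin_qadj qre_qvec_inner_commute)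
  have Xu: "qmat_vec (Suc m) (qadj X) u j = v j * qreal \<sigma>" if "j < Suc n" for j
    using qvec_inner_max_unit[OF v _ that, where w = "qmat_vec (Suc m) (qadj X) u"] max[OF u]
    unfolding re \<sigma>_def by blast
  have "qbilin (Suc m) (Suc n) X (\<lambda>i. - u i) v = - qbilin (Suc m) (Suc n) X u v"
    by (simp add: qbilin_def qvec_inner_def sum_negf)
  then have "0 \<le> \<sigma>"
    using max[of "\<lambda>i. - u i" v] u v by (simp add: \<sigma>_def qvec_norm2_def)
  obtain P where P: "qunitary (Suc m) P" and Pu: "\<And>i. i < Suc m \<Longrightarrow> P i 0 = u i"
    using qunitary_with_first_col[OF u] by blast
  obtain Q where Q: "qunitary (Suc n) Q" and Qv: "\<And>j. j < Suc n \<Longrightarrow> Q j 0 = v j"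
    using qunitary_with_first_col[OF v] by blast
  define Z where "Z = qmult (Suc n) (qmult (Suc m) (qadj P) X) Q"
  have "X = qmult (Suc n) (qmult (Suc m) P Z) (qadj Q)"
    unfolding Z_def using qunitary_conjugate_cancel(1)[OF P Q X] by simp
  moreover have "Z = qblock (qreal \<sigma>) (\<lambda>i j. Z (Suc i) (Suc j))"
    unfolding Z_def by (rule qblock_of_singular_pair[OF P Q X Pu Qv Xv Xu])
  moreover have "Z \<in> qmats (Suc m) (Suc n)"
    unfolding Z_def by (intro qmult_qmats qadj_qmats qunitary_qmats P Q X)
  then have "(\<lambda>i j. Z (Suc i) (Suc j)) \<in> qmats m n"
    by (auto intro!: qmatsI simp: qmatsD)
  ultimately show thesis
    using that P Q \<open>0 \<le> \<sigma>\<close> max unfolding \<sigma>_def by (metis (no_types, lifting))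
qed

theorem qsvd_exists:
  assumes "X \<in> qmats m n" "n \<le> m"
  shows "\<exists>s U V. is_qsvd m n X U s V"
  using assms
proof (induction n arbitrary: m X)
  case 0
  then have "is_qsvd m 0 X (qident m) (\<lambda>_. 0) (qident 0)"
    by (auto intro!: ext simp: is_qsvd_def qmult_def qmatsD)
  then show ?case by blast
next
  case (Suc n)
  obtain m' where m: "m = Suc m'"
    using Suc.prems(2) by (cases m) auto
  obtain P Q \<sigma> X' where P: "qunitary m P" and Q: "qunitary (Suc n) Q" and "0 \<le> \<sigma>"
    and X': "X' \<in> qmats m' n"
    and X: "X = qmult (Suc n) (qmult m P (qblock (qreal \<sigma>) X')) (qadj Q)"
    and max: "\<And>u v. qvec_norm2 m u = 1 \<Longrightarrow> qvec_norm2 (Suc n) v = 1 \<Longrightarrow>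
      qre (qbilin m (Suc n) X u v) \<le> \<sigma>"
    using qsvd_deflation[of X m' n] Suc.prems(1) unfolding m by metis
  obtain s' U' V' where svd': "is_qsvd m' n X' U' s' V'"
    using Suc.IH[OF X'] Suc.prems(2) m by auto
  define U where "U = qmult m P (qblock 1 U')"
  define V where "V = qmult (Suc n) Q (qblock 1 V')"
  have U: "qunitary m U" and V: "qunitary (Suc n) V"
    unfolding U_def V_def m using P Q is_qsvdD(1,2)[OF svd']
    by (simp_all add: m qunitary_qmult qunitary_qblock)
  have "X = qmult (Suc n) (qmult m U (qdiag m (Suc n) (case_nat \<sigma> s'))) (qadj V)"
    unfolding X is_qsvdD(6)[OF svd'] qblock_qsvd_form U_def V_def m
    by (simp add: qmult_assoc qadj_qmult)
  then have "qbilin m (Suc n) X (\<lambda>l. U l 1) (\<lambda>l. V l 1) = qreal (s' 0)" if "0 < min m' n"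
    using qbilin_qsvd_form_cols[OF U V, of 1] that m by simp
  then have "s' 0 \<le> \<sigma>" if "0 < min m' n"
    using that max[OF qunitary_col_qvec_norm2[OF U] qunitary_col_qvec_norm2[OF V]] m by fastforce
  then have "is_qsvd m (Suc n) X U (case_nat \<sigma> s') V"
    using is_qsvd_unitary_transform[OF is_qsvd_qblock[OF svd' \<open>0 \<le> \<sigma>\<close>] P[unfolded m] Q]
    unfolding X U_def V_def m by simp
  then show ?case by blast
qed

lemma is_qsvd_qsingvals:
  assumes "X \<in> qmats m n" "n \<le> m"
  obtains U V where "is_qsvd m n X U (qsingvals m n X) V"
  using someI_ex[OF qsvd_exists[OF assms]] unfolding qsingvals_def by blast

lemma is_qsvd_qmats: "is_qsvd m n X U s V \<Longrightarrow> X \<in> qmats m n"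
  unfolding is_qsvd_def by (blast intro: qmult_qmats qadj_qmats qunitary_qmats qdiag_qmats)

lemma qnuc_norm_qsvd:
  assumes "n \<le> m" "is_qsvd m n X U s V"
  shows "qnuc_norm m n X = (\<Sum>k<n. s k)"
proof -
  obtain U' V' where "is_qsvd m n X U' (qsingvals m n X) V'"
    using is_qsvd_qsingvals[OF is_qsvd_qmats[OF assms(2)] assms(1)] .
  then show ?thesis
    unfolding qnuc_norm_def using is_qsvd_singvals_unique[OF assms(1) _ assms(2)] assms(1)
    by (simp add: min_def)
qed

section \<open>Reduction to the vector problem\<close>

lemma vec_feasible_sum_sq_pos:
  assumes "vec_feasible n s"
  shows "0 < (\<Sum>k<n. (s k)\<^sup>2)"
proof -
  obtain i where "i < n" "s i \<noteq> 0"
    using assms unfolding vec_feasible_def by blast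
  then show ?thesis
    by (intro sum_pos2[of _ i]) auto
qed

lemma mat_obj_qsvd_form:
  assumes "n \<le> m" "is_qsvd m n Y U sY V" "vec_feasible n s"
  defines "X \<equiv> qmult n (qmult m U (qdiag m n s)) (qadj V)"
  shows "mat_obj m n lam Y X = vec_obj n lam sY s" and "X \<noteq> (\<lambda>i j. 0)"
proof -
  note Y = is_qsvdD[OF assms(2)]
  have mn: "min m n = n"
    using assms(1) by simp
  have s: "\<And>i j. i \<le> j \<Longrightarrow> j < n \<Longrightarrow> s j \<le> s i" "\<And>i. i < n \<Longrightarrow> 0 \<le> s i"
    using assms(3) unfolding vec_feasible_def by auto
  define s' where "s' i = (if i < n then s i else 0)" for i
  have "X = qmult n (qmult m U (qdiag m n s')) (qadj V)"
    unfolding X_def s'_def by (subst qdiag_cong) (auto simp: mn)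
  then have "is_qsvd m n X U s' V"
    unfolding is_qsvd_def using Y(1,2) s by (auto simp: mn s'_def)
  then have nuc: "qnuc_norm m n X = (\<Sum>k<n. \<bar>s k\<bar>)"
    using qnuc_norm_qsvd[OF assms(1)] s(2) by (simp add: s'_def)
  have fro: "qfro_norm m n X = sqrt (\<Sum>k<n. (s k)\<^sup>2)"
    unfolding X_def using qfro_norm_qsvd_form[OF assms(1) Y(1,2)] .
  have "qmat_diff Y X = qmult n (qmult m U (qdiag m n (\<lambda>k. sY k - s k))) (qadj V)"
    unfolding X_def Y(6) qmat_diff_qmult qmat_diff_qdiag ..
  then have diff: "(qfro_norm m n (qmat_diff Y X))\<^sup>2 = (\<Sum>k<n. (sY k - s k)\<^sup>2)"
    using qfro_norm_qsvd_form[OF assms(1) Y(1,2)] by (simp add: sum_nonneg)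
  show "mat_obj m n lam Y X = vec_obj n lam sY s"
    unfolding mat_obj_def vec_obj_def nuc fro diff ..
  show "X \<noteq> (\<lambda>i j. 0)"
    using fro vec_feasible_sum_sq_pos[OF assms(3)] by (auto simp: qfro_norm_def)
qed

lemma vec_obj_qsingvals_le_mat_obj:
  assumes "n \<le> m" "is_qsvd m n Y U sY V" "X \<in> qmats m n" "X \<noteq> (\<lambda>i j. 0)"
  shows "vec_feasible n (qsingvals m n X)"
    and "vec_obj n lam sY (qsingvals m n X) \<le> mat_obj m n lam Y X"
proof -
  obtain U' V' where svd: "is_qsvd m n X U' (qsingvals m n X) V'"
    using is_qsvd_qsingvals[OF assms(3,1)] .
  note X = is_qsvdD[OF svd]
  have mn: "min m n = n"
    using assms(1) by simp
  have fro: "qfro_norm m n X = sqrt (\<Sum>k<n. (qsingvals m n X k)\<^sup>2)"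
    using qfro_norm_qsvd_form[OF assms(1) X(1,2), of "qsingvals m n X", folded X(6)] .
  have "(\<Sum>k<n. (qsingvals m n X k)\<^sup>2) \<noteq> 0"
    using assms(3,4) fro by (auto simp: qfro_norm_eq_0_iff[symmetric])
  then have "\<exists>i<n. qsingvals m n X i \<noteq> 0"
    by (rule contrapos_np) (simp add: sum.neutral)
  then show "vec_feasible n (qsingvals m n X)"
    unfolding vec_feasible_def using X(3,4) mn by auto
  have "qnuc_norm m n X = (\<Sum>k<n. \<bar>qsingvals m n X k\<bar>)"
    using qnuc_norm_qsvd[OF assms(1) svd] X(3) mn by simp
  then show "vec_obj n lam sY (qsingvals m n X) \<le> mat_obj m n lam Y X"
    using mirsky_inequality[OF assms(1,2) svd] fro unfolding vec_obj_def mat_obj_def by simp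
qed

theorem theorem3p5:
  fixes m n :: nat and lam :: real and Y U V :: qmat and sY st :: "nat \<Rightarrow> real"
  assumes "n \<le> m"
    and "lam > 0"
    and "is_qsvd m n Y U sY V"
    and "vec_feasible n st"
    and "\<forall>s. vec_feasible n s \<longrightarrow> vec_obj n lam sY st \<le> vec_obj n lam sY s"
  shows "qmult n (qmult m U (qdiag m n st)) (qadj V) \<in> qmats m n
     \<and> qmult n (qmult m U (qdiag m n st)) (qadj V) \<noteq> (\<lambda>i j. 0)
     \<and> (\<forall>X \<in> qmats m n. X \<noteq> (\<lambda>i j. 0) \<longrightarrow>
          mat_obj m n lam Y (qmult n (qmult m U (qdiag m n st)) (qadj V)) \<le> mat_obj m n lam Y X)"
proof (intro conjI ballI impI)
  let ?X = "qmult n (qmult m U (qdiag m n st)) (qadj V)"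
  note Y = is_qsvdD[OF assms(3)]
  show "?X \<in> qmats m n"
    by (intro qmult_qmats qadj_qmats qunitary_qmats qdiag_qmats Y(1,2))
  show "?X \<noteq> (\<lambda>i j. 0)"
    by (rule mat_obj_qsvd_form(2)[OF assms(1,3,4)])
  fix X
  assume "X \<in> qmats m n" "X \<noteq> (\<lambda>i j. 0)"
  note X = vec_obj_qsingvals_le_mat_obj[OF assms(1,3) this]
  have "mat_obj m n lam Y ?X = vec_obj n lam sY st"
    by (rule mat_obj_qsvd_form(1)[OF assms(1,3,4)])
  also have "\<dots> \<le> vec_obj n lam sY (qsingvals m n X)"
    using assms(5) X(1) by blast
  also have "\<dots> \<le> mat_obj m n lam Y X"
    by (rule X(2))
  finally show "mat_obj m n lam Y ?X \<le> mat_obj m n lam Y X" .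
qed

end
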